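(* Consider a bipartite experiment where Alice chooses $x\in\{0,1\}$ and obtains $a\in\{\pm1\}$ with probability $\pi_{a|x}:=p(a|x)$, and conditioned on $(a,x)$ Bob's system is in the qubit state $\rho_{a|x}=\tfrac12(I+\mathbf s_{a|x}\cdot\boldsymbol\sigma)$ with Bloch vector $\mathbf s_{a|x}\in\mathbb R^3$, $\|\mathbf s_{a|x}\|\le1$. Bob chooses $y\in\{0,1\}$ and performs the binary projective measurement with observable $B_y=\mathbf b_y\cdot\boldsymbol\sigma$, $\|\mathbf b_y\|=1$, obtaining $b\in\{\pm1\}$, so that $p(a,b|x,y)=\pi_{a|x}\,\mathrm{Tr}\big(\rho_{a|x}\tfrac{I+bB_y}{2}\big)$. Let $E_{xy}=\sum_{a,b=\pm1}ab\,p(a,b|x,y)$ and $S_{\mathrm{CHSH}}=E_{00}+E_{01}+E_{10}-E_{11}$. For a pair of qubit states let the SWAP-test pass probability be $p(\mathsf{pass}|\rho,\sigma)=\tfrac12(1+\mathrm{Tr}(\rho\sigma))$, and define $$p_{\mathrm{pur}}^{\pm|x}=p(\mathsf{pass}|\rho_{\pm|x},\rho_{\pm|x}),\qquad p_{\mathrm{ov}}^{x}=p(\mathsf{pass}|\rho_{+|x},\rho_{-|x}),$$ $$\widetilde R_x^2:=2\Big[\pi_{+|x}^2(2p_{\mathrm{pur}}^{+|x}-1)+\pi_{-|x}^2(2p_{\mathrm{pur}}^{-|x}-1)-2\pi_{+|x}\pi_{-|x}(2p_{\mathrm{ov}}^{x}-1)\Big]-(\pi_{+|x}-\pi_{-|x})^2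 .$$ Then $$S_{\mathrm{CHSH}}\le 2\sqrt{\widetilde R_0^2+\widetilde R_1^2}.$$
   Context: $\boldsymbol\sigma=(\sigma_x,\sigma_y,\sigma_z)$ is the vector of Pauli matrices. $\widetilde R_x^2$ is called the weighted operational separation parameter of Bob's two conditional preparations at Alice's setting $x$. *)

theory Defs
  imports "HOL-Analysis.Analysis"
begin

definition pauli_x :: "complex^2^2" where
  "pauli_x = (\<chi> i j. if i \<noteq> j then 1 else 0)"

definition pauli_y :: "complex^2^2" where
  "pauli_y = (\<chi> i j. if i = 1 \<and> j = 2 then - \<i> else if i = 2 \<and> j = 1 then \<i> else 0)"

definition pauli_z :: "complex^2^2" where
  "pauli_z = (\<chi> i j. if i = j then (if i = 1 then 1 else -1) else 0)"

definition dot_sigma :: "real^3 \<Rightarrow> complex^2^2" where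
  "dot_sigma v = (v$1) *\<^sub>R pauli_x + (v$2) *\<^sub>R pauli_y + (v$3) *\<^sub>R pauli_z"

definition bloch_state :: "real^3 \<Rightarrow> complex^2^2" where
  "bloch_state s = (1/2) *\<^sub>R (mat 1 + dot_sigma s)"

text \<open>SWAP-test pass probability (1 + Tr(rho sigma))/2 (the trace is real for
  Hermitian matrices; we take its real part).\<close>
definition swap_pass :: "complex^2^2 \<Rightarrow> complex^2^2 \<Rightarrow> real" where
  "swap_pass \<rho> \<sigma> = (1 + Re (trace (\<rho> ** \<sigma>))) / 2"

text \<open>Outcomes a, b are the reals 1 and -1; settings x, y are the naturals 0, 1.
  pi a x = p(a|x); s a x = Bloch vector of Bob's conditional state; bv y = Bob's
  measurement direction.\<close>

definition joint_prob ::
  "(real \<Rightarrow> nat \<Rightarrow> real) \<Rightarrow> (real \<Rightarrow> nat \<Rightarrow> real^3) \<Rightarrow> (nat \<Rightarrow> real^3)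
     \<Rightarrow> real \<Rightarrow> real \<Rightarrow> nat \<Rightarrow> nat \<Rightarrow> real" where
  "joint_prob \<pi> s bv a b x y =
     \<pi> a x * Re (trace (bloch_state (s a x) ** ((1/2) *\<^sub>R (mat 1 + b *\<^sub>R dot_sigma (bv y)))))"

definition correlator ::
  "(real \<Rightarrow> nat \<Rightarrow> real) \<Rightarrow> (real \<Rightarrow> nat \<Rightarrow> real^3) \<Rightarrow> (nat \<Rightarrow> real^3) \<Rightarrow> nat \<Rightarrow> nat \<Rightarrow> real" where
  "correlator \<pi> s bv x y =
     (\<Sum>a\<in>{1, -1}. \<Sum>b\<in>{1, -1}. a * b * joint_prob \<pi> s bv a b x y)"

definition S_CHSH ::
  "(real \<Rightarrow> nat \<Rightarrow> real) \<Rightarrow> (real \<Rightarrow> nat \<Rightarrow> real^3) \<Rightarrow> (nat \<Rightarrow> real^3) \<Rightarrow> real" where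
  "S_CHSH \<pi> s bv = correlator \<pi> s bv 0 0 + correlator \<pi> s bv 0 1
                    + correlator \<pi> s bv 1 0 - correlator \<pi> s bv 1 1"

definition R_tilde_sq ::
  "(real \<Rightarrow> nat \<Rightarrow> real) \<Rightarrow> (real \<Rightarrow> nat \<Rightarrow> real^3) \<Rightarrow> nat \<Rightarrow> real" where
  "R_tilde_sq \<pi> s x =
     (let rp = bloch_state (s 1 x); rm = bloch_state (s (-1) x);
          ppp = swap_pass rp rp; ppm = swap_pass rm rm; pov = swap_pass rp rm
      in 2 * ((\<pi> 1 x)\<^sup>2 * (2 * ppp - 1) + (\<pi> (-1) x)\<^sup>2 * (2 * ppm - 1)
              - 2 * \<pi> 1 x * \<pi> (-1) x * (2 * pov - 1))
         - (\<pi> 1 x - \<pi> (-1) x)\<^sup>2)"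

end

theory Submission
  imports Defs
begin

text \<open>In the Bloch picture every quantity in the statement is an affine function of inner
  products of Bloch vectors. With the weighted difference
  \<open>v\<^sub>x = \<pi>\<^sub>+\<^sub>|\<^sub>x s\<^sub>+\<^sub>|\<^sub>x - \<pi>\<^sub>-\<^sub>|\<^sub>x s\<^sub>-\<^sub>|\<^sub>x\<close> one finds
  \<open>E\<^sub>x\<^sub>y = v\<^sub>x \<bullet> b\<^sub>y\<close> and \<open>R\<^sub>x\<^sup>2 = \<parallel>v\<^sub>x\<parallel>\<^sup>2\<close>, so that
  \<open>S = (v\<^sub>0, v\<^sub>1) \<bullet> (b\<^sub>0 + b\<^sub>1, b\<^sub>0 - b\<^sub>1)\<close>. Cauchy-Schwarz in the product space,
  together with the parallelogram law \<open>\<parallel>b\<^sub>0 + b\<^sub>1\<parallel>\<^sup>2 + \<parallel>b\<^sub>0 - b\<^sub>1\<parallel>\<^sup>2 = 4\<close>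
  for unit vectors, gives the bound. The two identities hold for arbitrary weights and Bloch
  vectors, so of the hypotheses only \<open>\<parallel>b\<^sub>y\<parallel> = 1\<close> is actually used.\<close>

lemma Re_trace_bloch_state_mult:
  "Re (trace (bloch_state s ** bloch_state t)) = (1 + s \<bullet> t) / 2"
  by (simp add: trace_def matrix_matrix_mult_def sum_2 bloch_state_def dot_sigma_def
      pauli_x_def pauli_y_def pauli_z_def mat_def inner_vec_def sum_3 algebra_simps)

lemma swap_pass_bloch_state:
  "swap_pass (bloch_state s) (bloch_state t) = (3 + s \<bullet> t) / 4"
  by (simp add: swap_pass_def Re_trace_bloch_state_mult)

lemma dot_sigma_scaleR: "dot_sigma (c *\<^sub>R v) = c *\<^sub>R dot_sigma v"
  by (simp add: dot_sigma_def scaleR_add_right)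

lemma joint_prob_eq:
  "joint_prob \<pi> s bv a b x y = \<pi> a x * (1 + b * (s a x \<bullet> bv y)) / 2"
proof -
  have "(1/2) *\<^sub>R (mat 1 + b *\<^sub>R dot_sigma (bv y)) = bloch_state (b *\<^sub>R bv y)"
    by (simp add: bloch_state_def dot_sigma_scaleR)
  then show ?thesis
    by (simp add: joint_prob_def Re_trace_bloch_state_mult)
qed

lemma correlator_eq_inner:
  "correlator \<pi> s bv x y = (\<pi> 1 x *\<^sub>R s 1 x - \<pi> (-1) x *\<^sub>R s (-1) x) \<bullet> bv y"
  by (simp add: correlator_def joint_prob_eq inner_diff_left field_simps)

lemma R_tilde_sq_eq_norm:
  "R_tilde_sq \<pi> s x = (norm (\<pi> 1 x *\<^sub>R s 1 x - \<pi> (-1) x *\<^sub>R s (-1) x))\<^sup>2"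
proof -
  have "(norm (\<pi> 1 x *\<^sub>R s 1 x - \<pi> (-1) x *\<^sub>R s (-1) x))\<^sup>2 =
      (\<pi> 1 x)\<^sup>2 * (s 1 x \<bullet> s 1 x) + (\<pi> (-1) x)\<^sup>2 * (s (-1) x \<bullet> s (-1) x)
      - 2 * \<pi> 1 x * \<pi> (-1) x * (s 1 x \<bullet> s (-1) x)"
    unfolding power2_norm_eq_inner
    by (simp add: inner_diff_left inner_diff_right inner_commute algebra_simps power2_eq_square)
  then show ?thesis
    by (simp add: R_tilde_sq_def swap_pass_bloch_state field_simps power2_eq_square)
qed

lemma parallelogram_law:
  fixes a b :: "'a::real_inner"
  shows "(norm (a + b))\<^sup>2 + (norm (a - b))\<^sup>2 = 2 * ((norm a)\<^sup>2 + (norm b)\<^sup>2)"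
  by (simp add: power2_norm_eq_inner inner_add_left inner_add_right
      inner_diff_left inner_diff_right inner_commute)

lemma norm_Pair_add_diff_unit:
  fixes a b :: "'a::real_inner"
  assumes "norm a = 1" and "norm b = 1"
  shows "norm (a + b, a - b) = 2"
  by (simp add: norm_Pair parallelogram_law assms)

theorem theorem2:
  fixes \<pi> :: "real \<Rightarrow> nat \<Rightarrow> real"
    and s :: "real \<Rightarrow> nat \<Rightarrow> real^3"
    and bv :: "nat \<Rightarrow> real^3"
  assumes pi_nonneg: "\<And>a x. a \<in> {1, -1} \<Longrightarrow> x \<in> {0, 1} \<Longrightarrow> \<pi> a x \<ge> 0"
    and pi_sum: "\<And>x. x \<in> {0, 1} \<Longrightarrow> \<pi> 1 x + \<pi> (-1) x = 1"
    and bloch: "\<And>a x. a \<in> {1, -1} \<Longrightarrow> x \<in> {0, 1} \<Longrightarrow> norm (s a x) \<le> 1"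
    and meas: "\<And>y. y \<in> {0, 1} \<Longrightarrow> norm (bv y) = 1"
  shows "S_CHSH \<pi> s bv \<le> 2 * sqrt (R_tilde_sq \<pi> s 0 + R_tilde_sq \<pi> s 1)"
proof -
  define v where "v x = \<pi> 1 x *\<^sub>R s 1 x - \<pi> (-1) x *\<^sub>R s (-1) x" for x
  define w where "w = (bv 0 + bv 1, bv 0 - bv 1)"
  have "S_CHSH \<pi> s bv = (v 0, v 1) \<bullet> w"
    by (simp add: S_CHSH_def correlator_eq_inner v_def w_def inner_add_right inner_diff_right)
  also have "\<dots> \<le> norm (v 0, v 1) * norm w"
    by (rule norm_cauchy_schwarz)
  also have "norm w = 2"
    unfolding w_def by (rule norm_Pair_add_diff_unit) (simp_all add: meas)
  also have "norm (v 0, v 1) = sqrt (R_tilde_sq \<pi> s 0 + R_tilde_sq \<pi> s 1)"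
    by (simp add: norm_Pair R_tilde_sq_eq_norm v_def)
  finally show ?thesis
    by simp
qed

end
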